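(* Let $K>0$, let $H_1,H_2$ be real Hilbert spaces, let $B=H_1\times H_2$ with the symmetric bilinear form $\lfloor (x_1,x_2),(y_1,y_2)\rfloor=K^2\langle x_1,y_1\rangle_{H_1}-\langle x_2,y_2\rangle_{H_2}$ and $q(b)=\frac12\lfloor b,b\rfloor$. Let $0<K'<K$ and let $f:D\to H_2$ be a $K'$-Lipschitz mapping defined on a nonempty closed set $D\subset H_1$. Then the graph of $f$ is $q$-representable.
   Context: $w(B,B)$ is the coarsest topology on $B$ making all maps $b\mapsto\lfloor b,c\rfloor$ ($c\in B$) continuous (here it coincides with the weak topology of the Hilbert space $H_1\times H_2$). A nonempty $A\subset B$ is $q$-positive if $q(b-c)\ge0$ for all $b,c\in A$. A $q$-positive set $A$ is $q$-representable if there exists a $w(B,B)$-lower semicontinuous proper convex function $\varphi:B\to\mathbb{R}\cup\{+\infty\}$ with $\varphi\ge q$ on $B$ and $\{b:\varphi(b)=q(b)\}=A$. A map $g$ is $L$-Lipschitz if $\|g(x)-g(y)\|_{H_2}\le L\|x-y\|_{H_1}$ on its domain. *)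

theory Defs
  imports "HOL-Analysis.Analysis"
begin

definition bform :: "real \<Rightarrow> ('a::real_inner \<times> 'b::real_inner) \<Rightarrow> ('a \<times> 'b) \<Rightarrow> real" where
  "bform K b c = K\<^sup>2 * inner (fst b) (fst c) - inner (snd b) (snd c)"

definition qform :: "real \<Rightarrow> ('a::real_inner \<times> 'b::real_inner) \<Rightarrow> real" where
  "qform K b = bform K b b / 2"

definition wtop :: "real \<Rightarrow> ('a::real_inner \<times> 'b::real_inner) topology" where
  "wtop K = topology_generated_by {{b. bform K b c \<in> U} | c U. open U}"

definition q_positive :: "real \<Rightarrow> ('a::real_inner \<times> 'b::real_inner) set \<Rightarrow> bool" where
  "q_positive K A \<longleftrightarrow> A \<noteq> {} \<and> (\<forall>b\<in>A. \<forall>c\<in>A. qform K (b - c) \<ge> 0)"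

definition lsc_wrt :: "'x topology \<Rightarrow> ('x \<Rightarrow> ereal) \<Rightarrow> bool" where
  "lsc_wrt T \<phi> \<longleftrightarrow> (\<forall>t::ereal. openin T {x. t < \<phi> x})"

definition proper_convex :: "('a::real_vector \<Rightarrow> ereal) \<Rightarrow> bool" where
  "proper_convex \<phi> \<longleftrightarrow> (\<forall>x. \<phi> x \<noteq> -\<infinity>) \<and> (\<exists>x. \<phi> x \<noteq> \<infinity>) \<and>
     (\<forall>x y u. 0 \<le> u \<and> u \<le> 1 \<longrightarrow>
        \<phi> (u *\<^sub>R x + (1 - u) *\<^sub>R y) \<le> ereal u * \<phi> x + ereal (1 - u) * \<phi> y)"

definition q_representable :: "real \<Rightarrow> ('a::real_inner \<times> 'b::real_inner) set \<Rightarrow> bool" where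
  "q_representable K A \<longleftrightarrow> q_positive K A \<and>
     (\<exists>\<phi>. lsc_wrt (wtop K) \<phi> \<and> proper_convex \<phi> \<and>
          (\<forall>b. ereal (qform K b) \<le> \<phi> b) \<and> {b. \<phi> b = ereal (qform K b)} = A)"

end

theory Submission
  imports Defs
begin

text \<open>For a point b off the graph A we construct an affine minorant x \<mapsto> \<lfloor>x, c\<rfloor> + e of q
  on A that exceeds q at b; the supremum of all affine minorants is then w(B,B)-lower
  semicontinuous and convex, and it meets q exactly on A.
  The minorant comes from separating (b, q b) from the convex hull of the epigraph of q on A in
  the Hilbert space B \<times> \<real>. The quantitative core is that (b, q b) stays away from this hull:
  for a convex combination of graph points with barycentre (m, w) and height t, the
  K'-Lipschitz bound shrinks the variance of the f-values to at most K'^2 times that of the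
  points of D, whence (K^2 - K'^2)/2 times the latter variance is at most t - q(m, w). This
  controls both the distance from D and the deviation of w from the graph.\<close>

lemma norm_diff_sq_parallelogram:
  fixes a b :: "'c::real_inner"
  shows "norm (a - b)^2 = 2 * norm a^2 + 2 * norm b^2 - 4 * norm ((1/2) *\<^sub>R a + (1/2) *\<^sub>R b)^2"
  by (simp add: power2_norm_eq_inner inner_add_left inner_add_right inner_diff_left
      inner_diff_right inner_commute algebra_simps)

lemma Cauchy_norm_minimizing_sequence:
  fixes s :: "nat \<Rightarrow> 'c::real_inner"
  assumes "convex E" and lower: "\<And>e. e \<in> E \<Longrightarrow> r \<le> norm e" and "0 \<le> r"
    and s: "\<And>k. s k \<in> E" and lim: "(\<lambda>k. norm (s k)) \<longlonglongrightarrow> r"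
  shows "Cauchy s"
proof (rule CauchyI)
  fix \<epsilon> :: real
  assume "0 < \<epsilon>"
  have "(\<lambda>k. norm (s k)^2) \<longlonglongrightarrow> r^2"
    using lim by (intro tendsto_intros)
  then have "eventually (\<lambda>k. norm (s k)^2 < r^2 + \<epsilon>^2/4) sequentially"
    using \<open>0 < \<epsilon>\<close> by (intro order_tendstoD) auto
  then obtain N where N: "\<And>k. k \<ge> N \<Longrightarrow> norm (s k)^2 < r^2 + \<epsilon>^2/4"
    by (auto simp: eventually_sequentially)
  have "norm (s m - s n) < \<epsilon>" if "m \<ge> N" "n \<ge> N" for m n
  proof -
    have "(1/2) *\<^sub>R s m + (1/2) *\<^sub>R s n \<in> E"
      using \<open>convex E\<close> s by (intro convexD) auto
    then have "r^2 \<le> norm ((1/2) *\<^sub>R s m + (1/2) *\<^sub>R s n)^2"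
      using lower \<open>0 \<le> r\<close> by (simp add: power_mono)
    then have "norm (s m - s n)^2 < \<epsilon>^2"
      using norm_diff_sq_parallelogram[of "s m" "s n"] N[OF that(1)] N[OF that(2)] by linarith
    then show ?thesis
      using \<open>0 < \<epsilon>\<close> by (simp add: power_less_imp_less_base)
  qed
  then show "\<exists>M. \<forall>m\<ge>M. \<forall>n\<ge>M. norm (s m - s n) < \<epsilon>"
    by blast
qed

lemma convex_closure_min_norm_point:
  fixes E :: "'c::{real_inner,complete_space} set"
  assumes "convex E" and "E \<noteq> {}"
  obtains p where "p \<in> closure E" and "\<And>e. e \<in> closure E \<Longrightarrow> norm p \<le> norm e"
proof -
  define r where "r = Inf (norm ` E)"
  have bdd: "bdd_below (norm ` E)"
    by (rule bdd_belowI[of _ 0]) auto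
  have "0 \<le> r"
    unfolding r_def using assms(2) by (intro cInf_greatest) auto
  have "closure E \<subseteq> {e. r \<le> norm e}"
  proof (rule closure_minimal)
    show "E \<subseteq> {e. r \<le> norm e}"
      unfolding r_def using bdd by (auto intro: cInf_lower)
  qed (intro closed_Collect_le continuous_intros)
  then have r_le: "\<And>e. e \<in> closure E \<Longrightarrow> r \<le> norm e"
    by blast
  have "r \<in> closure (norm ` E)"
    unfolding r_def using assms(2) bdd by (intro closure_contains_Inf) auto
  then obtain x where x_in: "\<forall>k. x k \<in> norm ` E" and x: "x \<longlonglongrightarrow> r"
    using closure_sequential[of r "norm ` E"] by blast
  have "\<exists>s. \<forall>k. s k \<in> E \<and> x k = norm (s k)"
    using x_in by (intro choice) blast
  then obtain s where s: "\<And>k. s k \<in> E" and "\<And>k. x k = norm (s k)"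
    by blast
  then have "(\<lambda>k. norm (s k)) = x"
    by auto
  with x have norm_s: "(\<lambda>k. norm (s k)) \<longlonglongrightarrow> r"
    by simp
  have "\<And>e. e \<in> E \<Longrightarrow> r \<le> norm e"
    using r_le closure_subset by blast
  then have "Cauchy s"
    by (rule Cauchy_norm_minimizing_sequence[OF assms(1) _ \<open>0 \<le> r\<close> s norm_s])
  then obtain p where p: "s \<longlonglongrightarrow> p"
    using Cauchy_convergent_iff convergent_def by blast
  have "p \<in> closure E"
    unfolding closure_sequential using s p by blast
  moreover have "norm p = r"
    using tendsto_norm[OF p] norm_s by (rule LIMSEQ_unique)
  ultimately show ?thesis
    using that r_le by simp
qed

lemma hilbert_separation_point:
  fixes E :: "'c::{real_inner,complete_space} set"
  assumes "convex E" and "E \<noteq> {}" and "z \<notin> closure E"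
  obtains p where "p \<noteq> 0" and "\<And>e. e \<in> E \<Longrightarrow> inner p p \<le> inner p (e - z)"
proof -
  let ?E = "(\<lambda>e. e - z) ` E"
  have "convex ?E"
    using assms(1) by simp
  then obtain p where p: "p \<in> closure ?E" and min: "\<And>e. e \<in> closure ?E \<Longrightarrow> norm p \<le> norm e"
    using convex_closure_min_norm_point[of ?E] assms(2) by blast
  have "p \<noteq> 0"
  proof
    assume "p = 0"
    then have "0 \<in> (\<lambda>e. e - z) ` closure E"
      using p by (simp only: closure_translation_subtract)
    then show False
      using assms(3) by auto
  qed
  moreover have "inner p p \<le> inner p (e - z)" if "e \<in> E" for e
  proof -
    have "e - z \<in> closure ?E"
      using that by (intro subsetD[OF closure_subset] imageI)
    with \<open>convex ?E\<close> p min have "inner (0 - p) ((e - z) - p) \<le> 0"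
      by (intro any_closest_point_dot[of "closure ?E"]) (simp_all add: convex_closure dist_norm)
    then show ?thesis
      by (simp add: inner_diff_right inner_commute)
  qed
  ultimately show ?thesis
    using that by blast
qed

definition weighted_variance :: "'i set \<Rightarrow> ('i \<Rightarrow> real) \<Rightarrow> ('i \<Rightarrow> 'c::real_inner) \<Rightarrow> real"
  where "weighted_variance F u v =
    (\<Sum>s\<in>F. u s * norm (v s)^2) - norm (\<Sum>s\<in>F. u s *\<^sub>R v s)^2"

lemma weighted_sum_norm_sq_diff:
  fixes v :: "'i \<Rightarrow> 'c::real_inner"
  assumes "finite F" and "sum u F = 1"
  shows "(\<Sum>s\<in>F. u s * norm (v s - c)^2) =
    weighted_variance F u v + norm ((\<Sum>s\<in>F. u s *\<^sub>R v s) - c)^2"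
proof -
  define M where "M = (\<Sum>s\<in>F. u s *\<^sub>R v s)"
  have expand: "norm (a - c)^2 = norm a^2 - 2 * inner a c + norm c^2" for a :: 'c
    unfolding power2_norm_eq_inner by (simp add: inner_diff_left inner_diff_right inner_commute)
  have "(\<Sum>s\<in>F. u s * norm (v s - c)^2) =
      (\<Sum>s\<in>F. u s * norm (v s)^2) - 2 * (\<Sum>s\<in>F. u s * inner (v s) c) + (\<Sum>s\<in>F. u s) * norm c^2"
    unfolding expand
    by (simp add: algebra_simps sum.distrib sum_subtractf sum_distrib_left sum_distrib_right)
  also have "(\<Sum>s\<in>F. u s * inner (v s) c) = inner M c"
    unfolding M_def by (simp add: inner_sum_left)
  finally show ?thesis
    using assms(2) unfolding weighted_variance_def M_def[symmetric] expand[of M] by simp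
qed

lemma weighted_variance_nonneg:
  assumes "finite F" and "sum u F = 1" and "\<And>s. s \<in> F \<Longrightarrow> 0 \<le> u s"
  shows "0 \<le> weighted_variance F u v"
  using weighted_sum_norm_sq_diff[OF assms(1,2), of v "\<Sum>s\<in>F. u s *\<^sub>R v s"] assms(3)
    sum_nonneg[of F "\<lambda>s. u s * norm (v s - (\<Sum>s\<in>F. u s *\<^sub>R v s))^2"]
  by simp

lemma weighted_variance_pairwise:
  fixes v :: "'i \<Rightarrow> 'c::real_inner"
  assumes "finite F" and "sum u F = 1"
  shows "(\<Sum>s'\<in>F. \<Sum>s\<in>F. u s' * u s * norm (v s - v s')^2) = 2 * weighted_variance F u v"
proof -
  define M where "M = (\<Sum>s\<in>F. u s *\<^sub>R v s)"
  define V where "V = weighted_variance F u v"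
  have shift: "(\<Sum>s\<in>F. u s * norm (v s - c)^2) = V + norm (M - c)^2" for c
    unfolding M_def V_def by (rule weighted_sum_norm_sq_diff[OF assms])
  have "(\<Sum>s'\<in>F. \<Sum>s\<in>F. u s' * u s * norm (v s - v s')^2) =
      (\<Sum>s'\<in>F. u s' * (\<Sum>s\<in>F. u s * norm (v s - v s')^2))"
    by (simp add: sum_distrib_left mult.assoc)
  also have "\<dots> = (\<Sum>s'\<in>F. u s' * (V + norm (M - v s')^2))"
    by (simp only: shift)
  also have "\<dots> = V * (\<Sum>s'\<in>F. u s') + (\<Sum>s'\<in>F. u s' * norm (M - v s')^2)"
    by (simp add: algebra_simps sum.distrib sum_distrib_left sum_distrib_right)
  also have "(\<Sum>s'\<in>F. u s' * norm (M - v s')^2) = V"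
    using shift[of M] by (simp add: norm_minus_commute)
  finally show ?thesis
    using assms(2) unfolding V_def by simp
qed

lemma weighted_variance_lipschitz_le:
  assumes lip: "K'-lipschitz_on D f"
    and "finite F" and "sum u F = 1" and "\<And>s. s \<in> F \<Longrightarrow> 0 \<le> u s"
    and "\<And>s. s \<in> F \<Longrightarrow> z s \<in> D"
  shows "weighted_variance F u (\<lambda>s. f (z s)) \<le> K'^2 * weighted_variance F u z"
proof -
  have "norm (f (z s) - f (z s'))^2 \<le> K'^2 * norm (z s - z s')^2" if "s \<in> F" "s' \<in> F" for s s'
  proof -
    have "norm (f (z s) - f (z s')) \<le> K' * norm (z s - z s')"
      using lipschitz_onD[OF lip] assms(5) that by (simp add: dist_norm)
    then show ?thesis
      by (metis norm_ge_zero power_mono power_mult_distrib)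
  qed
  then have "(\<Sum>s'\<in>F. \<Sum>s\<in>F. u s' * u s * norm (f (z s) - f (z s'))^2) \<le>
      (\<Sum>s'\<in>F. \<Sum>s\<in>F. u s' * u s * (K'^2 * norm (z s - z s')^2))"
    using assms(4) by (intro sum_mono mult_left_mono) auto
  also have "\<dots> = K'^2 * (\<Sum>s'\<in>F. \<Sum>s\<in>F. u s' * u s * norm (z s - z s')^2)"
    by (simp add: sum_distrib_left algebra_simps)
  finally show ?thesis
    unfolding weighted_variance_pairwise[OF assms(2,3)] by simp
qed

lemma bform_add_scaleR_left:
  "bform K (\<alpha> *\<^sub>R b1 + \<beta> *\<^sub>R b2) c = \<alpha> * bform K b1 c + \<beta> * bform K b2 c"
  unfolding bform_def by (simp add: inner_add_left algebra_simps)

lemma bform_add_scaleR_right: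
  "bform K b (\<alpha> *\<^sub>R c1 + \<beta> *\<^sub>R c2) = \<alpha> * bform K b c1 + \<beta> * bform K b c2"
  unfolding bform_def by (simp add: inner_add_right algebra_simps)

lemma bform_eq_inner:
  "K \<noteq> 0 \<Longrightarrow> bform K b ((1 / K^2) *\<^sub>R fst w, - snd w) = inner b w"
  unfolding bform_def inner_prod_def by simp

lemma qform_eq_norm: "qform K b = (K^2 * norm (fst b)^2 - norm (snd b)^2) / 2"
  unfolding qform_def bform_def power2_norm_eq_inner by simp

lemma qform_diff: "qform K (a - c) = qform K a - bform K a c + qform K c"
  unfolding qform_def bform_def
  by (simp add: inner_diff_left inner_diff_right inner_commute field_simps)

lemma weighted_sum_qform:
  fixes v :: "'i \<Rightarrow> 'a::real_inner \<times> 'b::real_inner"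
  shows "(\<Sum>s\<in>F. u s * qform K (v s)) =
    (K^2 * weighted_variance F u (\<lambda>s. fst (v s)) - weighted_variance F u (\<lambda>s. snd (v s))) / 2
      + qform K (\<Sum>s\<in>F. u s *\<^sub>R v s)"
proof -
  have "(\<Sum>s\<in>F. u s * qform K (v s)) =
      (K^2 * (\<Sum>s\<in>F. u s * norm (fst (v s))^2) - (\<Sum>s\<in>F. u s * norm (snd (v s))^2)) / 2"
    unfolding qform_eq_norm
    by (simp add: sum_divide_distrib[symmetric] sum_subtractf sum_distrib_left algebra_simps)
  then show ?thesis
    unfolding weighted_variance_def qform_eq_norm by (simp add: fst_sum snd_sum field_simps)
qed

definition graph_on :: "'a set \<Rightarrow> ('a \<Rightarrow> 'b) \<Rightarrow> ('a \<times> 'b) set"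
  where "graph_on D f = {(x, f x) | x. x \<in> D}"

definition q_epigraph :: "real \<Rightarrow> ('a::real_inner \<times> 'b::real_inner) set \<Rightarrow> (('a \<times> 'b) \<times> real) set"
  where "q_epigraph K A = {(a, t). a \<in> A \<and> qform K a \<le> t}"

lemma q_positive_lipschitz_graph:
  assumes lip: "K'-lipschitz_on D f" and "K' \<le> K" and "D \<noteq> {}"
  shows "q_positive K (graph_on D f)"
proof -
  have "0 \<le> qform K ((x, f x) - (x', f x'))" if "x \<in> D" "x' \<in> D" for x x'
  proof -
    have "0 \<le> K'"
      using lip lipschitz_on_nonneg by blast
    have "norm (f x - f x') \<le> K' * norm (x - x')"
      using lipschitz_onD[OF lip that] by (simp add: dist_norm)
    also have "\<dots> \<le> K * norm (x - x')"
      using \<open>K' \<le> K\<close> by (simp add: mult_right_mono)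
    finally have "norm (f x - f x')^2 \<le> (K * norm (x - x'))^2"
      by (simp add: power_mono)
    then show ?thesis
      unfolding qform_eq_norm by (simp add: power_mult_distrib)
  qed
  then show ?thesis
    using assms(3) unfolding q_positive_def graph_on_def by auto
qed

lemma convex_hull_q_epigraph_graph:
  fixes f :: "'a::real_inner \<Rightarrow> 'b::real_inner"
  assumes lip: "K'-lipschitz_on D f"
    and hull: "((m, w), t) \<in> convex hull q_epigraph K (graph_on D f)"
  obtains F :: "(('a \<times> 'b) \<times> real) set" and u z
  where "finite F" and "\<And>s. s \<in> F \<Longrightarrow> 0 \<le> u s" and "sum u F = 1"
    and "\<And>s. s \<in> F \<Longrightarrow> z s \<in> D" and "w = (\<Sum>s\<in>F. u s *\<^sub>R f (z s))"
    and "\<And>x. (K^2 - K'^2) / 2 * ((\<Sum>s\<in>F. u s * norm (z s - x)^2) - norm (m - x)^2)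
               \<le> t - qform K (m, w)"
proof -
  obtain F u where F: "finite F" "F \<subseteq> q_epigraph K (graph_on D f)"
    and u: "\<forall>s\<in>F. 0 \<le> u s" "sum u F = 1" and sum_eq: "(\<Sum>s\<in>F. u s *\<^sub>R s) = ((m, w), t)"
    using hull unfolding convex_hull_explicit by blast
  define z where "z s = fst (fst s)" for s :: "('a \<times> 'b) \<times> real"
  have zD: "z s \<in> D" and graph: "snd (fst s) = f (z s)" and above: "qform K (fst s) \<le> snd s"
    if "s \<in> F" for s
    using F(2) that by (auto simp: q_epigraph_def graph_on_def z_def)
  have m: "m = (\<Sum>s\<in>F. u s *\<^sub>R z s)"
    using arg_cong[OF sum_eq, of "\<lambda>e. fst (fst e)"] by (simp add: fst_sum z_def)
  have w: "w = (\<Sum>s\<in>F. u s *\<^sub>R f (z s))"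
  proof -
    have "w = (\<Sum>s\<in>F. u s *\<^sub>R snd (fst s))"
      using arg_cong[OF sum_eq, of "\<lambda>e. snd (fst e)"] by (simp add: fst_sum snd_sum)
    also have "\<dots> = (\<Sum>s\<in>F. u s *\<^sub>R f (z s))"
      using graph by (intro sum.cong) auto
    finally show ?thesis .
  qed
  have t: "t = (\<Sum>s\<in>F. u s * snd s)"
    using arg_cong[OF sum_eq, of snd] by (simp add: snd_sum)
  define Vz where "Vz = weighted_variance F u z"
  define Vf where "Vf = weighted_variance F u (\<lambda>s. f (z s))"
  have "(\<Sum>s\<in>F. u s * qform K (fst s)) = (\<Sum>s\<in>F. u s * qform K (z s, f (z s)))"
    using graph by (intro sum.cong) (auto simp: z_def prod_eq_iff)
  also have "\<dots> = (K^2 * Vz - Vf) / 2 + qform K (\<Sum>s\<in>F. u s *\<^sub>R (z s, f (z s)))"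
    unfolding weighted_sum_qform Vz_def Vf_def by simp
  also have "(\<Sum>s\<in>F. u s *\<^sub>R (z s, f (z s))) = (m, w)"
    unfolding m w by (simp add: prod_eq_iff fst_sum snd_sum)
  finally have mean_q: "(\<Sum>s\<in>F. u s * qform K (fst s)) = (K^2 * Vz - Vf) / 2 + qform K (m, w)" .
  have "(\<Sum>s\<in>F. u s * qform K (fst s)) \<le> t"
    unfolding t using u(1) above by (intro sum_mono mult_left_mono) auto
  have "Vf \<le> K'^2 * Vz"
    unfolding Vz_def Vf_def using lip F(1) u zD by (intro weighted_variance_lipschitz_le) auto
  have "(K^2 - K'^2) / 2 * Vz = (K^2 * Vz - K'^2 * Vz) / 2"
    by (simp add: algebra_simps)
  also have "\<dots> \<le> (K^2 * Vz - Vf) / 2"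
    using \<open>Vf \<le> K'^2 * Vz\<close> by simp
  also have "\<dots> \<le> t - qform K (m, w)"
    using mean_q \<open>(\<Sum>s\<in>F. u s * qform K (fst s)) \<le> t\<close> by linarith
  finally have "(K^2 - K'^2) / 2 * Vz \<le> t - qform K (m, w)" .
  moreover have "(\<Sum>s\<in>F. u s * norm (z s - x)^2) - norm (m - x)^2 = Vz" for x
    unfolding Vz_def m weighted_sum_norm_sq_diff[OF F(1) u(2)] by simp
  ultimately have "(K^2 - K'^2) / 2 * ((\<Sum>s\<in>F. u s * norm (z s - x)^2) - norm (m - x)^2)
      \<le> t - qform K (m, w)" for x
    by simp
  with that F(1) u zD w show ?thesis
    by blast
qed

lemma notin_closure_if_continuous_nonneg:
  fixes G :: "'c::topological_space \<Rightarrow> real"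
  assumes "continuous_on UNIV G" and "\<And>e. e \<in> H \<Longrightarrow> 0 \<le> G e" and "G z < 0"
  shows "z \<notin> closure H"
proof -
  have "closure H \<subseteq> {e. 0 \<le> G e}"
    using assms(1,2) by (intro closure_minimal closed_Collect_le continuous_on_const) auto
  then show ?thesis
    using assms(3) by force
qed

lemma convex_hull_q_epigraph_graph_infdist:
  fixes f :: "'a::real_inner \<Rightarrow> 'b::real_inner"
  assumes "K'-lipschitz_on D f" and "K' \<le> K"
    and "((m, w), t) \<in> convex hull q_epigraph K (graph_on D f)"
  shows "(K^2 - K'^2) / 2 * (infdist x D ^ 2 - norm (m - x)^2) \<le> t - qform K (m, w)"
proof -
  obtain F :: "(('a \<times> 'b) \<times> real) set" and u z
    where F: "finite F" "\<And>s. s \<in> F \<Longrightarrow> 0 \<le> u s" "sum u F = 1" "\<And>s. s \<in> F \<Longrightarrow> z s \<in> D"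
      and "w = (\<Sum>s\<in>F. u s *\<^sub>R f (z s))"
      and bound: "\<And>x. (K^2 - K'^2) / 2 * ((\<Sum>s\<in>F. u s * norm (z s - x)^2) - norm (m - x)^2)
                  \<le> t - qform K (m, w)"
    using convex_hull_q_epigraph_graph[OF assms(1,3)] by blast
  have "0 \<le> K'"
    using assms(1) lipschitz_on_nonneg by blast
  then have "0 \<le> (K^2 - K'^2) / 2"
    using \<open>K' \<le> K\<close> by (simp add: power_mono)
  have "infdist x D ^ 2 = (\<Sum>s\<in>F. u s * infdist x D ^ 2)"
    using F(3) by (simp add: sum_distrib_right[symmetric])
  also have "\<dots> \<le> (\<Sum>s\<in>F. u s * norm (z s - x)^2)"
  proof (intro sum_mono mult_left_mono F(2))
    fix s
    assume "s \<in> F"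
    then have "infdist x D \<le> norm (z s - x)"
      using infdist_le[OF F(4)] by (simp add: dist_norm norm_minus_commute)
    then show "infdist x D ^ 2 \<le> norm (z s - x)^2"
      by (simp add: power_mono infdist_nonneg)
  qed
  finally have "(K^2 - K'^2) / 2 * (infdist x D ^ 2 - norm (m - x)^2)
      \<le> (K^2 - K'^2) / 2 * ((\<Sum>s\<in>F. u s * norm (z s - x)^2) - norm (m - x)^2)"
    using \<open>0 \<le> (K^2 - K'^2) / 2\<close> by (intro mult_left_mono) auto
  with bound[of x] show ?thesis
    by linarith
qed

lemma convex_hull_q_epigraph_graph_dist:
  fixes f :: "'a::real_inner \<Rightarrow> 'b::real_inner"
  assumes lip: "K'-lipschitz_on D f" and "K' \<le> K" and "x \<in> D"
    and "((m, w), t) \<in> convex hull q_epigraph K (graph_on D f)"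
  shows "(K^2 - K'^2) / 2 * norm (w - f x)^2 \<le> K'^2 * (t - qform K (m, w) + (K^2 - K'^2) / 2 * norm (m - x)^2)"
proof -
  obtain F :: "(('a \<times> 'b) \<times> real) set" and u z
    where F: "finite F" "\<And>s. s \<in> F \<Longrightarrow> 0 \<le> u s" "sum u F = 1" "\<And>s. s \<in> F \<Longrightarrow> z s \<in> D"
      and w_eq: "w = (\<Sum>s\<in>F. u s *\<^sub>R f (z s))"
      and bound: "\<And>x. (K^2 - K'^2) / 2 * ((\<Sum>s\<in>F. u s * norm (z s - x)^2) - norm (m - x)^2)
                  \<le> t - qform K (m, w)"
    using convex_hull_q_epigraph_graph[OF lip assms(4)] by blast
  define \<kappa> where "\<kappa> = (K^2 - K'^2) / 2"
  have "0 \<le> K'"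
    using lip lipschitz_on_nonneg by blast
  then have "0 \<le> \<kappa>"
    unfolding \<kappa>_def using \<open>K' \<le> K\<close> by (simp add: power_mono)
  have "norm (w - f x)^2 \<le> (\<Sum>s\<in>F. u s * norm (f (z s) - f x)^2)"
    unfolding w_eq weighted_sum_norm_sq_diff[OF F(1,3)]
    using weighted_variance_nonneg[OF F(1,3,2)] by simp
  also have "\<dots> \<le> (\<Sum>s\<in>F. u s * (K'^2 * norm (z s - x)^2))"
  proof (intro sum_mono mult_left_mono F(2))
    fix s
    assume "s \<in> F"
    then have "norm (f (z s) - f x) \<le> K' * norm (z s - x)"
      using lipschitz_onD[OF lip F(4) \<open>x \<in> D\<close>] by (simp add: dist_norm)
    then show "norm (f (z s) - f x)^2 \<le> K'^2 * norm (z s - x)^2"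
      by (metis norm_ge_zero power_mono power_mult_distrib)
  qed
  also have "\<dots> = K'^2 * (\<Sum>s\<in>F. u s * norm (z s - x)^2)"
    by (simp add: sum_distrib_left algebra_simps)
  finally have "\<kappa> * norm (w - f x)^2 \<le> K'^2 * (\<kappa> * (\<Sum>s\<in>F. u s * norm (z s - x)^2))"
    using \<open>0 \<le> \<kappa>\<close> by (simp add: mult_left_mono mult.left_commute)
  also have "\<dots> \<le> K'^2 * (t - qform K (m, w) + \<kappa> * norm (m - x)^2)"
    using bound[of x] unfolding \<kappa>_def by (intro mult_left_mono) (simp_all add: algebra_simps)
  finally show ?thesis
    unfolding \<kappa>_def .
qed

lemma lipschitz_graph_point_notin_closure_hull:
  fixes f :: "'a::real_inner \<Rightarrow> 'b::real_inner"
  assumes lip: "K'-lipschitz_on D f" and "K' < K" and "closed D" and "D \<noteq> {}"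
    and "b \<notin> graph_on D f"
  shows "(b, qform K b) \<notin> closure (convex hull q_epigraph K (graph_on D f))"
proof -
  define \<kappa> where "\<kappa> = (K^2 - K'^2) / 2"
  have "0 \<le> K'"
    using lip lipschitz_on_nonneg by blast
  then have "0 < \<kappa>"
    unfolding \<kappa>_def using \<open>K' < K\<close> by (simp add: power_strict_mono)
  obtain x y where b: "b = (x, y)"
    by fastforce
  define slack where "slack e = snd e - qform K (fst e) + \<kappa> * norm (fst (fst e) - x)^2"
    for e :: "('a \<times> 'b) \<times> real"
  have "continuous_on UNIV slack"
    unfolding slack_def qform_eq_norm by (intro continuous_intros) auto
  show ?thesis
  proof (cases "x \<in> D")
    case True
    then have "y \<noteq> f x"
      using assms(5) b by (auto simp: graph_on_def)
    show ?thesis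
    proof (rule notin_closure_if_continuous_nonneg)
      show "continuous_on UNIV (\<lambda>e. K'^2 * slack e - \<kappa> * norm (snd (fst e) - f x)^2)"
        using \<open>continuous_on UNIV slack\<close> by (intro continuous_intros)
      show "0 \<le> K'^2 * slack e - \<kappa> * norm (snd (fst e) - f x)^2"
        if "e \<in> convex hull q_epigraph K (graph_on D f)" for e
        using convex_hull_q_epigraph_graph_dist[OF lip _ True, of K "fst (fst e)" "snd (fst e)" "snd e"]
          that \<open>K' < K\<close> unfolding slack_def \<kappa>_def by simp
      show "K'^2 * slack (b, qform K b) - \<kappa> * norm (snd (fst (b, qform K b)) - f x)^2 < 0"
        using \<open>0 < \<kappa>\<close> \<open>y \<noteq> f x\<close> unfolding slack_def b by simp
    qed
  next
    case False
    then have "0 < infdist x D"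
      using assms(3,4) by (rule infdist_pos_not_in_closed[rotated 2])
    show ?thesis
    proof (rule notin_closure_if_continuous_nonneg)
      show "continuous_on UNIV (\<lambda>e. slack e - \<kappa> * infdist x D ^ 2)"
        using \<open>continuous_on UNIV slack\<close> by (intro continuous_intros)
      show "0 \<le> slack e - \<kappa> * infdist x D ^ 2"
        if "e \<in> convex hull q_epigraph K (graph_on D f)" for e
        using convex_hull_q_epigraph_graph_infdist[OF lip, of K "fst (fst e)" "snd (fst e)" "snd e" x]
          that \<open>K' < K\<close> unfolding slack_def \<kappa>_def by (simp add: algebra_simps)
      show "slack (b, qform K b) - \<kappa> * infdist x D ^ 2 < 0"
        using \<open>0 < \<kappa>\<close> \<open>0 < infdist x D\<close> unfolding slack_def b by simp
    qed
  qed
qed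

lemma strict_affine_minorant_of_separation:
  fixes A :: "('a::real_inner \<times> 'b::real_inner) set"
  assumes "K \<noteq> 0" and "a0 \<in> A" and tangent: "\<And>a. a \<in> A \<Longrightarrow> 0 \<le> qform K (a - a0)"
    and "0 < \<nu>"
    and sep: "\<And>a t. a \<in> A \<Longrightarrow> qform K a \<le> t \<Longrightarrow> \<nu> \<le> inner n (a - b) + \<tau> * (t - qform K b)"
  shows "\<exists>c e. (\<forall>a\<in>A. bform K a c + e \<le> qform K a) \<and> qform K b < bform K b c + e"
proof -
  have "0 \<le> \<tau>"
  proof (rule ccontr)
    assume "\<not> 0 \<le> \<tau>"
    define C where "C = inner n (a0 - b) + \<tau> * (qform K a0 - qform K b)"
    define s where "s = (\<bar>C\<bar> + \<nu>) / (- \<tau>)"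
    have "0 \<le> s" and "\<tau> * s = - (\<bar>C\<bar> + \<nu>)"
      using \<open>\<not> 0 \<le> \<tau>\<close> \<open>0 < \<nu>\<close> unfolding s_def by (auto simp: field_simps)
    moreover have "\<nu> \<le> C + \<tau> * s"
      using sep[OF \<open>a0 \<in> A\<close>, of "qform K a0 + s"] \<open>0 \<le> s\<close> unfolding C_def
      by (simp add: algebra_simps)
    ultimately show False
      using \<open>0 < \<nu>\<close> by linarith
  qed
  text \<open>The separating functional need not be a minorant itself (e.g. if \<tau> = 0); added
    with a large weight \<mu> to the tangent minorant at a0 and renormalised, it becomes one.\<close>
  define tangent_at where "tangent_at x = bform K x a0 - qform K a0" for x
  define \<mu> where "\<mu> = (\<bar>qform K b - tangent_at b\<bar> + 1) / \<nu>"
  define \<delta> where "\<delta> = 1 + \<mu> * \<tau>"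
  define c where "c = (1 / \<delta>) *\<^sub>R a0 + (- \<mu> / \<delta>) *\<^sub>R ((1 / K^2) *\<^sub>R fst n, - snd n)"
  define e where "e = (- qform K a0 + \<mu> * (\<nu> + \<tau> * qform K b + inner n b)) / \<delta>"
  define l where "l x = (tangent_at x + \<mu> * (\<nu> + \<tau> * qform K b - inner n (x - b))) / \<delta>" for x
  have "0 \<le> \<mu>" and "\<mu> * \<nu> = \<bar>qform K b - tangent_at b\<bar> + 1"
    unfolding \<mu>_def using \<open>0 < \<nu>\<close> by auto
  have "0 < \<delta>"
    unfolding \<delta>_def using \<open>0 \<le> \<mu>\<close> \<open>0 \<le> \<tau>\<close> by (simp add: add_pos_nonneg)
  have "l a \<le> qform K a" if "a \<in> A" for a
  proof -
    have "tangent_at a \<le> qform K a"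
      using tangent[OF that] unfolding qform_diff tangent_at_def by simp
    moreover have "\<mu> * (\<nu> + \<tau> * qform K b - inner n (a - b)) \<le> \<mu> * (\<tau> * qform K a)"
      using sep[OF that order_refl] \<open>0 \<le> \<mu>\<close> by (intro mult_left_mono) (simp_all add: algebra_simps)
    ultimately show ?thesis
      unfolding l_def \<delta>_def using \<open>0 < \<delta>\<close>[unfolded \<delta>_def]
      by (simp add: pos_divide_le_eq algebra_simps)
  qed
  moreover have "qform K b < l b"
    unfolding l_def using \<open>0 < \<delta>\<close> \<open>\<mu> * \<nu> = _\<close>
    by (simp add: pos_less_divide_eq \<delta>_def algebra_simps)
  moreover have "l x = bform K x c + e" for x
  proof -
    have "bform K x c = (1 / \<delta>) * bform K x a0 - \<mu> / \<delta> * inner x n"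
      unfolding c_def bform_add_scaleR_right bform_eq_inner[OF \<open>K \<noteq> 0\<close>] by simp
    then show ?thesis
      unfolding l_def e_def tangent_at_def using \<open>0 < \<delta>\<close>
      by (simp add: inner_diff_right inner_commute field_simps)
  qed
  ultimately show ?thesis
    by metis
qed

lemma lipschitz_graph_strict_affine_minorant:
  fixes f :: "'a::{real_inner,complete_space} \<Rightarrow> 'b::{real_inner,complete_space}"
  assumes "0 < K" and "K' < K" and "D \<noteq> {}" and "closed D" and lip: "K'-lipschitz_on D f"
    and "b \<notin> graph_on D f"
  shows "\<exists>c e. (\<forall>a\<in>graph_on D f. bform K a c + e \<le> qform K a) \<and> qform K b < bform K b c + e"
proof -
  let ?E = "convex hull q_epigraph K (graph_on D f)"
  obtain x0 where "x0 \<in> D"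
    using assms(3) by blast
  then have a0: "(x0, f x0) \<in> graph_on D f"
    by (auto simp: graph_on_def)
  then have "?E \<noteq> {}"
    using hull_subset[of "q_epigraph K (graph_on D f)" convex] by (auto simp: q_epigraph_def)
  moreover have "(b, qform K b) \<notin> closure ?E"
    by (rule lipschitz_graph_point_notin_closure_hull[OF lip assms(2,4,3,6)])
  ultimately obtain p where "p \<noteq> 0" and p: "\<And>e. e \<in> ?E \<Longrightarrow> inner p p \<le> inner p (e - (b, qform K b))"
    by (rule hilbert_separation_point[OF convex_convex_hull]) blast
  have sep: "inner p p \<le> inner (fst p) (a - b) + snd p * (t - qform K b)"
    if "a \<in> graph_on D f" "qform K a \<le> t" for a t
  proof -
    have "(a, t) \<in> ?E"
      using that hull_subset[of "q_epigraph K (graph_on D f)" convex] by (auto simp: q_epigraph_def)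
    from p[OF this] show ?thesis
      by (simp add: inner_prod_def)
  qed
  have "q_positive K (graph_on D f)"
    using lip assms(2,3) by (intro q_positive_lipschitz_graph) auto
  then have "0 \<le> qform K (a - (x0, f x0))" if "a \<in> graph_on D f" for a
    using a0 that unfolding q_positive_def by blast
  with a0 sep \<open>p \<noteq> 0\<close> \<open>0 < K\<close> show ?thesis
    by (intro strict_affine_minorant_of_separation[where \<nu> = "inner p p" and n = "fst p" and \<tau> = "snd p"])
      auto
qed

lemma open_Collect_less_ereal_add: "open {s::real. t < ereal (s + e)}"
proof (cases t)
  case (real r)
  then have "{s::real. t < ereal (s + e)} = {r - e <..}"
    by auto
  then show ?thesis
    by simp
qed simp_all

lemma lsc_wrt_SUP_bform_affine:
  "lsc_wrt (wtop K) (\<lambda>b. SUP ce\<in>C. ereal (bform K b (fst ce) + snd ce))"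
  unfolding lsc_wrt_def
proof
  fix t :: ereal
  have "{b. t < (SUP ce\<in>C. ereal (bform K b (fst ce) + snd ce))} =
      (\<Union>ce\<in>C. {b. bform K b (fst ce) \<in> {s. t < ereal (s + snd ce)}})"
    by (auto simp: less_SUP_iff)
  also have "openin (wtop K) \<dots>"
    unfolding wtop_def
    by (intro openin_Union ballI, clarify, rule topology_generated_by_Basis)
      (use open_Collect_less_ereal_add in blast)
  finally show "openin (wtop K) {b. t < (SUP ce\<in>C. ereal (bform K b (fst ce) + snd ce))}" .
qed

lemma proper_convex_SUP_bform_affine:
  assumes "C \<noteq> {}" and "(SUP ce\<in>C. ereal (bform K a (fst ce) + snd ce)) \<noteq> \<infinity>"
  shows "proper_convex (\<lambda>b. SUP ce\<in>C. ereal (bform K b (fst ce) + snd ce))"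
  unfolding proper_convex_def
proof (intro conjI allI impI)
  fix x
  obtain ce where "ce \<in> C"
    using assms(1) by blast
  then have "ereal (bform K x (fst ce) + snd ce) \<le> (SUP ce\<in>C. ereal (bform K x (fst ce) + snd ce))"
    by (rule SUP_upper)
  then show "(SUP ce\<in>C. ereal (bform K x (fst ce) + snd ce)) \<noteq> -\<infinity>"
    by auto
next
  fix x y and u :: real
  assume u: "0 \<le> u \<and> u \<le> 1"
  let ?\<phi> = "\<lambda>b. SUP ce\<in>C. ereal (bform K b (fst ce) + snd ce)"
  show "?\<phi> (u *\<^sub>R x + (1 - u) *\<^sub>R y) \<le> ereal u * ?\<phi> x + ereal (1 - u) * ?\<phi> y"
  proof (rule SUP_least)
    fix ce
    assume "ce \<in> C"
    have "ereal (bform K (u *\<^sub>R x + (1 - u) *\<^sub>R y) (fst ce) + snd ce) =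
        ereal u * ereal (bform K x (fst ce) + snd ce) + ereal (1 - u) * ereal (bform K y (fst ce) + snd ce)"
      unfolding bform_add_scaleR_left by (simp add: algebra_simps)
    also have "\<dots> \<le> ereal u * ?\<phi> x + ereal (1 - u) * ?\<phi> y"
      using u \<open>ce \<in> C\<close> by (intro add_mono ereal_mult_left_mono SUP_upper) auto
    finally show "ereal (bform K (u *\<^sub>R x + (1 - u) *\<^sub>R y) (fst ce) + snd ce) \<le> \<dots>" .
  qed
qed (use assms(2) in blast)

lemma q_representable_if_strict_affine_minorants:
  assumes pos: "q_positive K A"
    and strict: "\<And>b. b \<notin> A \<Longrightarrow> \<exists>c e. (\<forall>a\<in>A. bform K a c + e \<le> qform K a) \<and> qform K b < bform K b c + e"
  shows "q_representable K A"
proof -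
  define C where "C = {(c, e). \<forall>a\<in>A. bform K a c + e \<le> qform K a}"
  define \<phi> where "\<phi> b = (SUP ce\<in>C. ereal (bform K b (fst ce) + snd ce))" for b
  have tangent: "(a, - qform K a) \<in> C" if "a \<in> A" for a
    using pos that unfolding C_def q_positive_def qform_diff by fastforce
  have \<phi>_A: "\<phi> a = ereal (qform K a)" if "a \<in> A" for a
  proof (rule antisym)
    show "\<phi> a \<le> ereal (qform K a)"
      unfolding \<phi>_def using that by (intro SUP_least) (auto simp: C_def)
    have "ereal (bform K a a - qform K a) \<le> \<phi> a"
      unfolding \<phi>_def using tangent[OF that] by (force intro: SUP_upper2)
    then show "ereal (qform K a) \<le> \<phi> a"
      by (simp add: qform_def)
  qed
  have \<phi>_not_A: "ereal (qform K b) < \<phi> b" if b: "b \<notin> A" for b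
  proof -
    obtain c e where "(c, e) \<in> C" and "qform K b < bform K b c + e"
      using strict[OF b] unfolding C_def by blast
    then show ?thesis
      unfolding \<phi>_def by (force intro: less_SUP_iff[THEN iffD2])
  qed
  obtain a0 where "a0 \<in> A"
    using pos unfolding q_positive_def by blast
  have "proper_convex \<phi>"
    unfolding \<phi>_def using tangent[OF \<open>a0 \<in> A\<close>] \<phi>_A[OF \<open>a0 \<in> A\<close>]
    by (intro proper_convex_SUP_bform_affine[where a = a0]) (auto simp: \<phi>_def)
  moreover have "lsc_wrt (wtop K) \<phi>"
    unfolding \<phi>_def by (rule lsc_wrt_SUP_bform_affine)
  moreover have "ereal (qform K b) \<le> \<phi> b" for b
    using \<phi>_A[of b] \<phi>_not_A[of b] by (cases "b \<in> A") simp_all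
  moreover have "{b. \<phi> b = ereal (qform K b)} = A"
    using \<phi>_A \<phi>_not_A by force
  ultimately show ?thesis
    using pos unfolding q_representable_def by blast
qed

theorem mainTheorem18:
  fixes K K' :: real
    and f :: "'a::{real_inner,complete_space} \<Rightarrow> 'b::{real_inner,complete_space}"
    and D :: "'a set"
  assumes "0 < K" and "0 < K'" and "K' < K"
    and "D \<noteq> {}" and "closed D"
    and "K'-lipschitz_on D f"
  shows "q_representable K {(x, f x) | x. x \<in> D}"
proof -
  have "q_representable K (graph_on D f)"
  proof (rule q_representable_if_strict_affine_minorants)
    show "q_positive K (graph_on D f)"
      using assms by (intro q_positive_lipschitz_graph) auto
    show "\<exists>c e. (\<forall>a\<in>graph_on D f. bform K a c + e \<le> qform K a) \<and> qform K b < bform K b c + e"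
      if "b \<notin> graph_on D f" for b
      using assms that by (intro lipschitz_graph_strict_affine_minorant) auto
  qed
  then show ?thesis
    unfolding graph_on_def .
qed

end
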